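(* Let $t\ge1$ and $n=t+1$. The gadget $\mathtt{SecScalarMult}$ defined below is $t$-SNI secure. $\mathtt{SecScalarMult}$ takes as input a Boolean sharing $(\mathbf{x}_i)_{1\le i\le n}$ of a vector $\mathbf{x}\in\mathbb{F}_q^l$ and a multiplicative sharing $(p_i)_{1\le i\le n}$ of a coefficient $p\in\mathbb{F}_q^*$, and outputs a Boolean sharing $(\mathbf{y}_i)$ of $p\cdot\mathbf{x}$, computed as follows: set $(\mathbf{y}_i):=(\mathbf{x}_i)$; for $j=1,\dots,n$: for $k=1,\dots,l$: set $\mathbf{y}[k]_i := p_j\cdot\mathbf{y}[k]_i$ for every $i$, then set $(\mathbf{y}[k]_i):=\mathtt{Refresh}((\mathbf{y}[k]_i))$. Return $(\mathbf{y}_i)$.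
   Context: A Boolean sharing of $x\in\mathbb{F}_q$ is a tuple $(x_1,\dots,x_n)$ with $x=x_1+\cdots+x_n$ (field addition); vectors are shared coordinate-wise, and $\mathbf{v}[k]$ is the $k$-th coordinate. A multiplicative sharing of $p\in\mathbb{F}_q^*$ is $(p_1,\dots,p_n)\in(\mathbb{F}_q^* )^n$ with $p=p_1\cdots p_n$. $\mathtt{Refresh}((x_i))$: set $y_i:=x_i$; for $i=2,\dots,n$: sample $r$ uniformly from $\mathbb{F}_q$, set $y_1:=y_1+r$ and $y_i:=y_i-r$; return $(y_i)$. Probing model: an adversary may place probes on intermediate values (internal wires) of a gadget and on its output shares. A gadget with one output sharing and some input sharings is $t$-NI (resp. $t$-SNI) secure if any set of at most $t_1$ probes on internal wires and $t_2$ probes on output shares, with $t_1+t_2\le t$, can be perfectly simulated using at most $t_1+t_2$ (resp. $t_1$) shares of each of its input sharings. *)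

theory Defs
  imports "HOL-Probability.Probability"
begin

text \<open>Share indices and vector coordinates are 1-based: shares i in {1..n},
  coordinates k in {1..l}.  A Boolean sharing of a vector is
  x :: nat => nat => 'a, where x i is the i-th share (a vector) and x i k its
  k-th coordinate.\<close>

text \<open>Refresh, with its randomness rr m (m = 2..n) supplied explicitly.\<close>
definition refresh_out :: "nat \<Rightarrow> (nat \<Rightarrow> 'a::field) \<Rightarrow> (nat \<Rightarrow> 'a) \<Rightarrow> nat \<Rightarrow> 'a" where
  "refresh_out n z rr i = (if i = 1 then z 1 + (\<Sum>m\<in>{2..n}. rr m) else z i - rr i)"

text \<open>Randomness of SecScalarMult: r (j,k,m) is the value sampled in the Refresh
  performed at outer iteration j, coordinate k, inner loop index m.\<close>
definition ssm_rand_idx :: "nat \<Rightarrow> nat \<Rightarrow> (nat \<times> nat \<times> nat) set" where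
  "ssm_rand_idx n l = {1..n} \<times> {1..l} \<times> {2..n}"

definition ssm_rand :: "nat \<Rightarrow> nat \<Rightarrow> (nat \<times> nat \<times> nat \<Rightarrow> 'a::finite) pmf" where
  "ssm_rand n l = Pi_pmf (ssm_rand_idx n l) undefined (\<lambda>_. pmf_of_set UNIV)"

text \<open>State of coordinate k of the sharing y after j outer iterations.\<close>
fun ssm_state :: "nat \<Rightarrow> (nat \<Rightarrow> nat \<Rightarrow> 'a::field) \<Rightarrow> (nat \<Rightarrow> 'a) \<Rightarrow> (nat \<times> nat \<times> nat \<Rightarrow> 'a)
    \<Rightarrow> nat \<Rightarrow> nat \<Rightarrow> nat \<Rightarrow> 'a" where
  "ssm_state n x p r k 0 i = x i k"
| "ssm_state n x p r k (Suc j) i =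
     refresh_out n (\<lambda>i'. p (Suc j) * ssm_state n x p r k j i') (\<lambda>m. r (Suc j, k, m)) i"

text \<open>Internal wires of SecScalarMult:
  WX i k: input share coordinate x_i[k];  WP j: input share p_j;
  WMul j k i: p_j * y[k]_i (value after multiplication at iteration (j,k));
  WRnd j k m: the random r sampled at step m of that Refresh;
  WAcc j k m: the value of y_1 after step m of that Refresh;
  WSub j k m: the value y_m - r at step m of that Refresh.\<close>
datatype wire = WX nat nat | WP nat | WMul nat nat nat | WRnd nat nat nat
  | WAcc nat nat nat | WSub nat nat nat

fun ssm_valid_wire :: "nat \<Rightarrow> nat \<Rightarrow> wire \<Rightarrow> bool" where
  "ssm_valid_wire n l (WX i k) = (i \<in> {1..n} \<and> k \<in> {1..l})"
| "ssm_valid_wire n l (WP j) = (j \<in> {1..n})"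
| "ssm_valid_wire n l (WMul j k i) = (j \<in> {1..n} \<and> k \<in> {1..l} \<and> i \<in> {1..n})"
| "ssm_valid_wire n l (WRnd j k m) = (j \<in> {1..n} \<and> k \<in> {1..l} \<and> m \<in> {2..n})"
| "ssm_valid_wire n l (WAcc j k m) = (j \<in> {1..n} \<and> k \<in> {1..l} \<and> m \<in> {2..n})"
| "ssm_valid_wire n l (WSub j k m) = (j \<in> {1..n} \<and> k \<in> {1..l} \<and> m \<in> {2..n})"

definition ssm_wires :: "nat \<Rightarrow> nat \<Rightarrow> wire set" where
  "ssm_wires n l = {w. ssm_valid_wire n l w}"

fun ssm_wire_val :: "nat \<Rightarrow> (nat \<Rightarrow> nat \<Rightarrow> 'a::field) \<Rightarrow> (nat \<Rightarrow> 'a) \<Rightarrow> (nat \<times> nat \<times> nat \<Rightarrow> 'a)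
    \<Rightarrow> wire \<Rightarrow> 'a" where
  "ssm_wire_val n x p r (WX i k) = x i k"
| "ssm_wire_val n x p r (WP j) = p j"
| "ssm_wire_val n x p r (WMul j k i) = p j * ssm_state n x p r k (j - 1) i"
| "ssm_wire_val n x p r (WRnd j k m) = r (j, k, m)"
| "ssm_wire_val n x p r (WAcc j k m) =
     p j * ssm_state n x p r k (j - 1) 1 + (\<Sum>m'\<in>{2..m}. r (j, k, m'))"
| "ssm_wire_val n x p r (WSub j k m) = p j * ssm_state n x p r k (j - 1) m - r (j, k, m)"

definition ssm_out :: "nat \<Rightarrow> nat \<Rightarrow> (nat \<Rightarrow> nat \<Rightarrow> 'a::field) \<Rightarrow> (nat \<Rightarrow> 'a)
    \<Rightarrow> (nat \<times> nat \<times> nat \<Rightarrow> 'a) \<Rightarrow> nat \<Rightarrow> nat \<Rightarrow> 'a" where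
  "ssm_out n l x p r i = (\<lambda>k. if k \<in> {1..l} then ssm_state n x p r k n i else 0)"

text \<open>Joint distribution of the values observed by probes on the internal wires P
  and on the output shares Q (an output probe sees a whole output share).\<close>
definition ssm_leak :: "nat \<Rightarrow> nat \<Rightarrow> wire set \<Rightarrow> nat set \<Rightarrow> (nat \<Rightarrow> nat \<Rightarrow> 'a::{field,finite})
    \<Rightarrow> (nat \<Rightarrow> 'a) \<Rightarrow> ((wire \<Rightarrow> 'a) \<times> (nat \<Rightarrow> nat \<Rightarrow> 'a)) pmf" where
  "ssm_leak n l P Q x p = map_pmf
     (\<lambda>r. (\<lambda>w. if w \<in> P then ssm_wire_val n x p r w else 0,
           \<lambda>i. if i \<in> Q then ssm_out n l x p r i else (\<lambda>_. 0)))
     (ssm_rand n l)"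

definition t_SNI ::
  "nat \<Rightarrow> nat \<Rightarrow> 'w set \<Rightarrow> ((nat \<Rightarrow> 'u) \<Rightarrow> (nat \<Rightarrow> 'v) \<Rightarrow> bool)
   \<Rightarrow> ('w set \<Rightarrow> nat set \<Rightarrow> (nat \<Rightarrow> 'u) \<Rightarrow> (nat \<Rightarrow> 'v) \<Rightarrow> 'obs pmf) \<Rightarrow> bool" where
  "t_SNI t n W valid leak \<longleftrightarrow>
     (\<forall>P Q. P \<subseteq> W \<longrightarrow> Q \<subseteq> {1..n} \<longrightarrow> finite P \<longrightarrow> card P + card Q \<le> t \<longrightarrow>
        (\<exists>I J. I \<subseteq> {1..n} \<and> J \<subseteq> {1..n} \<and> card I \<le> card P \<and> card J \<le> card P \<and>
           (\<exists>Sim :: (nat \<Rightarrow> 'u) \<Rightarrow> (nat \<Rightarrow> 'v) \<Rightarrow> 'obs pmf.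
              \<forall>x p. valid x p \<longrightarrow> leak P Q x p = Sim (restrict x I) (restrict p J))))"

definition ssm_valid :: "nat \<Rightarrow> (nat \<Rightarrow> nat \<Rightarrow> 'a::field) \<Rightarrow> (nat \<Rightarrow> 'a) \<Rightarrow> bool" where
  "ssm_valid n x p \<longleftrightarrow> (\<forall>j\<in>{1..n}. p j \<noteq> 0)"

end

theory Submission imports Defs begin

text \<open>Fewer than n probes leave some iteration j0 of the outer loop unprobed and some
  share index c0 unobserved.  For two inputs that agree on the shares the probes touch
  before iteration j0, we transform the randomness bijectively so that the second run
  differs from the first only in share c0 from iteration j0 on: the unprobed Refreshes
  absorb all differences into share c0, while at probed iterations the shares p_j
  agree and the randomness is left unchanged.  Since uniform randomness is invariant
  under bijections, the observations have the same distribution in both runs.\<close>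

lemma t_SNI_if_leak_determined_by_shares:
  assumes "\<And>P Q. P \<subseteq> W \<Longrightarrow> Q \<subseteq> {1..n} \<Longrightarrow> finite P \<Longrightarrow> card P + card Q \<le> t \<Longrightarrow>
      \<exists>I J. I \<subseteq> {1..n} \<and> J \<subseteq> {1..n} \<and> card I \<le> card P \<and> card J \<le> card P \<and>
        (\<forall>x p. valid x p \<longrightarrow> leak P Q x p = leak P Q (restrict x I) (restrict p J))"
  shows "t_SNI t n W valid leak"
  unfolding t_SNI_def
proof (intro allI impI)
  fix P Q assume "P \<subseteq> W" "Q \<subseteq> {1..n}" "finite P" "card P + card Q \<le> t"
  from assms[OF this] obtain I J where "I \<subseteq> {1..n}" "J \<subseteq> {1..n}" "card I \<le> card P" "card J \<le> card P"
    and "\<forall>x p. valid x p \<longrightarrow> leak P Q x p = leak P Q (restrict x I) (restrict p J)"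
    by (elim exE conjE)
  then show "\<exists>I J. I \<subseteq> {1..n} \<and> J \<subseteq> {1..n} \<and> card I \<le> card P \<and> card J \<le> card P \<and>
      (\<exists>Sim. \<forall>x p. valid x p \<longrightarrow> leak P Q x p = Sim (restrict x I) (restrict p J))"
    by blast
qed

lemma sum_atLeast1_atMost_split:
  assumes "(n::nat) \<ge> 1"
  shows "sum f {1..n} = f 1 + sum f {2..n}"
  using sum.atLeast_Suc_atMost[of 1 n f] assms by (simp add: numeral_2_eq_2)

lemma refresh_out_sum:
  assumes "n \<ge> 1"
  shows "(\<Sum>i\<in>{1..n}. refresh_out n z rr i) = (\<Sum>i\<in>{1..n}. z i)"
proof -
  have "(\<Sum>i\<in>{1..n}. refresh_out n z rr i)
      = z 1 + (\<Sum>m\<in>{2..n}. rr m) + (\<Sum>i\<in>{2..n}. z i - rr i)"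
    unfolding sum_atLeast1_atMost_split[OF assms] by (simp add: refresh_out_def)
  also have "\<dots> = (\<Sum>i\<in>{1..n}. z i)"
    unfolding sum_atLeast1_atMost_split[OF assms] by (simp add: sum_subtractf)
  finally show ?thesis .
qed

lemma ssm_state_sum:
  assumes "n \<ge> 1"
  shows "(\<Sum>i\<in>{1..n}. ssm_state n x p r k j i) = (\<Prod>j'\<in>{1..j}. p j') * (\<Sum>i\<in>{1..n}. x i k)"
proof (induction j)
  case 0
  then show ?case by simp
next
  case (Suc j)
  have "(\<Sum>i\<in>{1..n}. ssm_state n x p r k (Suc j) i)
      = (\<Sum>i\<in>{1..n}. p (Suc j) * ssm_state n x p r k j i)"
    using refresh_out_sum[OF assms] by simp
  also have "\<dots> = p (Suc j) * (\<Sum>i\<in>{1..n}. ssm_state n x p r k j i)"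
    by (simp add: sum_distrib_left)
  also have "\<dots> = (\<Prod>j'\<in>{1..Suc j}. p j') * (\<Sum>i\<in>{1..n}. x i k)"
    using Suc by (simp add: prod.nat_ivl_Suc')
  finally show ?case .
qed

lemma ssm_rand_from_states:
  assumes "(j, k, m) \<in> ssm_rand_idx n l"
  shows "r (j, k, m) = p j * ssm_state n x p r k (j - 1) m - ssm_state n x p r k j m"
proof -
  obtain j0 where "j = Suc j0" using assms by (cases j) (auto simp: ssm_rand_idx_def)
  moreover have "m \<noteq> 1" using assms by (auto simp: ssm_rand_idx_def)
  ultimately show ?thesis by (simp add: refresh_out_def)
qed

definition ssm_rand_space :: "nat \<Rightarrow> nat \<Rightarrow> (nat \<times> nat \<times> nat \<Rightarrow> 'a) set" where
  "ssm_rand_space n l = PiE_dflt (ssm_rand_idx n l) undefined (\<lambda>_. UNIV)"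

lemma finite_ssm_rand_space: "finite (ssm_rand_space n l :: (nat \<times> nat \<times> nat \<Rightarrow> 'a::finite) set)"
  unfolding ssm_rand_space_def by (intro finite_PiE_dflt) (auto simp: ssm_rand_idx_def)

lemma ssm_rand_space_nonempty: "ssm_rand_space n l \<noteq> {}"
  unfolding ssm_rand_space_def PiE_dflt_def by auto

lemma ssm_rand_eq_pmf_of_set: "ssm_rand n l = pmf_of_set (ssm_rand_space n l)"
  unfolding ssm_rand_def ssm_rand_space_def
  by (rule Pi_pmf_of_set) (auto simp: ssm_rand_idx_def)

lemma map_pmf_ssm_rand_inj:
  fixes f :: "(nat \<times> nat \<times> nat \<Rightarrow> 'a::finite) \<Rightarrow> (nat \<times> nat \<times> nat \<Rightarrow> 'a)"
  assumes "inj_on f (ssm_rand_space n l)" and "f ` ssm_rand_space n l \<subseteq> ssm_rand_space n l"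
  shows "map_pmf f (ssm_rand n l) = ssm_rand n l"
proof -
  have "f ` ssm_rand_space n l = ssm_rand_space n l"
    using endo_inj_surj[OF finite_ssm_rand_space assms(2,1)] .
  then show ?thesis
    unfolding ssm_rand_eq_pmf_of_set
    using map_pmf_of_set_inj[OF assms(1) ssm_rand_space_nonempty finite_ssm_rand_space] by simp
qed

text \<open>wire_iter w is the outer iteration at which w is computed (0 for input wires);
  wire_shares w is the set of indices of the sharing entering that iteration on which
  w depends (the accumulator of a Refresh lives in share 1).\<close>

fun wire_iter :: "wire \<Rightarrow> nat" where
  "wire_iter (WX i k) = 0"
| "wire_iter (WP j) = j"
| "wire_iter (WMul j k i) = j"
| "wire_iter (WRnd j k m) = j"
| "wire_iter (WAcc j k m) = j"
| "wire_iter (WSub j k m) = j"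

fun wire_shares :: "wire \<Rightarrow> nat set" where
  "wire_shares (WX i k) = {i}"
| "wire_shares (WP j) = {}"
| "wire_shares (WMul j k i) = {i}"
| "wire_shares (WRnd j k m) = {}"
| "wire_shares (WAcc j k m) = {1}"
| "wire_shares (WSub j k m) = {m}"

lemma card_wire_shares_le: "card (wire_shares w) \<le> 1"
  by (cases w) auto

lemma finite_wire_shares: "finite (wire_shares w)"
  by (cases w) auto

lemma wire_shares_subset: "n \<ge> 1 \<Longrightarrow> ssm_valid_wire n l w \<Longrightarrow> wire_shares w \<subseteq> {1..n}"
  by (cases w) auto

lemma wire_iter_le: "ssm_valid_wire n l w \<Longrightarrow> wire_iter w \<le> n"
  by (cases w) auto

lemma wire_iter_eq_0_iff: "ssm_valid_wire n l w \<Longrightarrow> wire_iter w = 0 \<longleftrightarrow> (\<exists>i k. w = WX i k)"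
  by (cases w) auto

definition probed_iter :: "wire set \<Rightarrow> nat \<Rightarrow> bool" where
  "probed_iter P j \<longleftrightarrow> j \<in> wire_iter ` P"

definition probed_upto :: "wire set \<Rightarrow> nat \<Rightarrow> bool" where
  "probed_upto P j \<longleftrightarrow> (\<forall>j'\<in>{1..j}. probed_iter P j')"

text \<open>Input shares matter only through wires located before the first unprobed
  iteration: from there on the coupling below hides every difference in one
  unobserved share.\<close>

definition sim_x_shares :: "wire set \<Rightarrow> nat set" where
  "sim_x_shares P = \<Union> (wire_shares ` {w\<in>P. probed_upto P (wire_iter w)})"

definition sim_p_shares :: "wire set \<Rightarrow> nat set" where
  "sim_p_shares P = wire_iter ` P - {0}"

lemma probed_upto_Suc: "probed_upto P (Suc j) \<longleftrightarrow> probed_upto P j \<and> probed_iter P (Suc j)"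
  by (auto simp: probed_upto_def atLeastAtMostSuc_conv)

lemma card_Union_wire_shares_le:
  assumes "finite P"
  shows "card (\<Union> (wire_shares ` P)) \<le> card P"
proof -
  have "card (\<Union> (wire_shares ` P)) \<le> (\<Sum>w\<in>P. card (wire_shares w))"
    by (rule card_UN_le[OF assms])
  also have "\<dots> \<le> (\<Sum>w\<in>P. 1)"
    by (intro sum_mono card_wire_shares_le)
  finally show ?thesis by simp
qed

lemma card_sim_x_shares_le:
  assumes "finite P"
  shows "card (sim_x_shares P) \<le> card P"
proof -
  have "sim_x_shares P \<subseteq> \<Union> (wire_shares ` P)"
    by (auto simp: sim_x_shares_def)
  moreover have "finite (\<Union> (wire_shares ` P))"
    using assms finite_wire_shares by blast
  ultimately show ?thesis
    using card_mono card_Union_wire_shares_le[OF assms] le_trans by blast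
qed

lemma card_sim_p_shares_le:
  assumes "finite P"
  shows "card (sim_p_shares P) \<le> card P"
proof -
  have "card (sim_p_shares P) \<le> card (wire_iter ` P)"
    unfolding sim_p_shares_def using assms by (intro card_mono) auto
  also have "\<dots> \<le> card P" by (rule card_image_le[OF assms])
  finally show ?thesis .
qed

lemma exists_unprobed_iter:
  assumes "finite P" and "card P < n"
  shows "\<exists>j\<in>{1..n}. \<not> probed_iter P j"
proof (rule ccontr)
  assume "\<not> ?thesis"
  then have "card {1..n} \<le> card (wire_iter ` P)"
    using assms(1) by (intro card_mono) (auto simp: probed_iter_def)
  also have "\<dots> \<le> card P" by (rule card_image_le[OF assms(1)])
  finally show False using assms(2) by simp
qed

lemma exists_unobserved_share:
  assumes "finite P" and "finite Q" and "card P + card Q < n"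
  obtains c where "c \<in> {1..n}" "c \<notin> \<Union> (wire_shares ` P)" "c \<notin> Q"
proof -
  have "finite (\<Union> (wire_shares ` P))" using assms(1) finite_wire_shares by blast
  then have "card (\<Union> (wire_shares ` P) \<union> Q) < card {1..n}"
    using card_Un_le[of "\<Union> (wire_shares ` P)" Q] card_Union_wire_shares_le[OF assms(1)] assms(3)
    by simp
  then have "\<not> {1..n} \<subseteq> \<Union> (wire_shares ` P) \<union> Q"
    using \<open>finite (\<Union> (wire_shares ` P))\<close> assms(2) card_mono
    by (metis finite_Un leD)
  then show ?thesis using that by blast
qed

locale ssm_coupling =
  fixes n l :: nat and P :: "wire set" and Q :: "nat set" and c0 :: nat
    and x x' :: "nat \<Rightarrow> nat \<Rightarrow> 'a::{field,finite}" and p p' :: "nat \<Rightarrow> 'a"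
  assumes P_wires: "P \<subseteq> ssm_wires n l"
    and Q_shares: "Q \<subseteq> {1..n}"
    and c0_share: "c0 \<in> {1..n}"
    and c0_unprobed: "c0 \<notin> \<Union> (wire_shares ` P)"
    and c0_not_output: "c0 \<notin> Q"
    and unprobed_iter: "\<exists>j\<in>{1..n}. \<not> probed_iter P j"
    and x_agree: "\<And>i. i \<in> sim_x_shares P \<Longrightarrow> x' i = x i"
    and p_agree: "\<And>j. j \<in> sim_p_shares P \<Longrightarrow> p' j = p j"
begin

lemma n_pos: "n \<ge> 1"
  using c0_share by simp

lemma p_agree_probed: "probed_iter P j \<Longrightarrow> j \<ge> 1 \<Longrightarrow> p' j = p j"
  using p_agree by (auto simp: probed_iter_def sim_p_shares_def)

definition total_diff :: "nat \<Rightarrow> nat \<Rightarrow> 'a" where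
  "total_diff k j = (\<Prod>j'\<in>{1..j}. p' j') * (\<Sum>i\<in>{1..n}. x' i k)
                  - (\<Prod>j'\<in>{1..j}. p j') * (\<Sum>i\<in>{1..n}. x i k)"

text \<open>diff is the deviation of the coupled run from the run on (x, p): probed
  iterations scale it along, every unprobed Refresh moves it entirely into share c0.\<close>

fun diff :: "nat \<Rightarrow> nat \<Rightarrow> nat \<Rightarrow> 'a" where
  "diff k 0 c = x' c k - x c k"
| "diff k (Suc j) c =
     (if probed_iter P (Suc j) then p (Suc j) * diff k j c
      else if c = c0 then total_diff k (Suc j) else 0)"

definition coupled_state :: "(nat \<times> nat \<times> nat \<Rightarrow> 'a) \<Rightarrow> nat \<Rightarrow> nat \<Rightarrow> nat \<Rightarrow> 'a" where
  "coupled_state r k j c = ssm_state n x p r k j c + diff k j c"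

text \<open>The randomness that makes the run on (x', p') pass through coupled_state,
  read off from the Refresh recurrence as in ssm_rand_from_states.\<close>

definition coupled_rand :: "(nat \<times> nat \<times> nat \<Rightarrow> 'a) \<Rightarrow> nat \<times> nat \<times> nat \<Rightarrow> 'a" where
  "coupled_rand r = (\<lambda>(j, k, m). if (j, k, m) \<in> ssm_rand_idx n l
     then p' j * coupled_state r k (j - 1) m - coupled_state r k j m else undefined)"

lemma diff_sum: "(\<Sum>c\<in>{1..n}. diff k j c) = total_diff k j"
proof (induction j)
  case 0
  then show ?case by (simp add: total_diff_def sum_subtractf)
next
  case (Suc j)
  show ?case
  proof (cases "probed_iter P (Suc j)")
    case True
    then have "p' (Suc j) = p (Suc j)" using p_agree_probed by simp
    moreover have "(\<Sum>c\<in>{1..n}. diff k (Suc j) c) = p (Suc j) * total_diff k j"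
      using True Suc by (simp add: sum_distrib_left[symmetric])
    ultimately show ?thesis
      by (simp add: total_diff_def prod.nat_ivl_Suc' algebra_simps)
  next
    case False
    then show ?thesis using c0_share by (simp add: sum.delta)
  qed
qed

lemma coupled_state_sum:
  "(\<Sum>c\<in>{1..n}. coupled_state r k j c) = (\<Prod>j'\<in>{1..j}. p' j') * (\<Sum>i\<in>{1..n}. x' i k)"
  unfolding coupled_state_def sum.distrib ssm_state_sum[OF n_pos] diff_sum
  by (simp add: total_diff_def)

lemma ssm_state_coupled_rand:
  assumes "k \<in> {1..l}"
  shows "j \<le> n \<Longrightarrow> i \<in> {1..n} \<Longrightarrow> ssm_state n x' p' (coupled_rand r) k j i = coupled_state r k j i"
proof (induction j arbitrary: i)
  case 0
  then show ?case by (simp add: coupled_state_def)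
next
  case (Suc j)
  let ?T = "coupled_state r k"
  have rand: "coupled_rand r (Suc j, k, m) = p' (Suc j) * ?T j m - ?T (Suc j) m" if "m \<in> {2..n}" for m
    using that assms Suc.prems by (simp add: coupled_rand_def ssm_rand_idx_def)
  have IH: "ssm_state n x' p' (coupled_rand r) k j c = ?T j c" if "c \<in> {1..n}" for c
    using Suc that by simp
  note sum_split = sum_atLeast1_atMost_split[OF n_pos]
  show ?case
  proof (cases "i = 1")
    case True
    have "ssm_state n x' p' (coupled_rand r) k (Suc j) i
        = p' (Suc j) * ?T j 1 + (\<Sum>m\<in>{2..n}. p' (Suc j) * ?T j m - ?T (Suc j) m)"
      using True IH n_pos rand by (simp add: refresh_out_def)
    also have "\<dots> = p' (Suc j) * (\<Sum>c\<in>{1..n}. ?T j c) - (\<Sum>m\<in>{2..n}. ?T (Suc j) m)"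
      unfolding sum_split by (simp add: sum_subtractf sum_distrib_left algebra_simps)
    also have "p' (Suc j) * (\<Sum>c\<in>{1..n}. ?T j c) = (\<Sum>c\<in>{1..n}. ?T (Suc j) c)"
      unfolding coupled_state_sum by (simp add: prod.nat_ivl_Suc' algebra_simps)
    also have "(\<Sum>c\<in>{1..n}. ?T (Suc j) c) - (\<Sum>m\<in>{2..n}. ?T (Suc j) m) = ?T (Suc j) 1"
      unfolding sum_split by simp
    finally show ?thesis using True by simp
  next
    case False
    then show ?thesis using IH rand Suc.prems by (simp add: refresh_out_def)
  qed
qed

lemma diff_invariant:
  "(probed_upto P j \<longrightarrow> (\<forall>c\<in>sim_x_shares P. diff k j c = 0))
   \<and> (\<not> probed_upto P j \<longrightarrow> (\<forall>c. c \<noteq> c0 \<longrightarrow> diff k j c = 0))"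
proof (induction j)
  case 0
  then show ?case by (simp add: probed_upto_def x_agree)
next
  case (Suc j)
  then show ?case by (auto simp: probed_upto_Suc)
qed

lemma diff_zero_at_probed_wire:
  assumes "w \<in> P" "wire_iter w = Suc j" "c \<in> wire_shares w"
  shows "diff k j c = 0"
proof (cases "probed_upto P j")
  case True
  have "probed_iter P (Suc j)" using assms by (force simp: probed_iter_def)
  then have "probed_upto P (Suc j)" using True probed_upto_Suc by blast
  then have "c \<in> sim_x_shares P" using assms by (auto simp: sim_x_shares_def)
  then show ?thesis using diff_invariant True by blast
next
  case False
  have "c \<noteq> c0" using assms c0_unprobed by auto
  then show ?thesis using diff_invariant False by blast
qed

lemma coupled_rand_probed_iter:
  assumes "probed_iter P (Suc j)" "(Suc j, k, m) \<in> ssm_rand_idx n l"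
  shows "coupled_rand r (Suc j, k, m) = r (Suc j, k, m)"
proof -
  have "p' (Suc j) = p (Suc j)" using p_agree_probed assms by simp
  moreover have "m \<noteq> 1" using assms by (auto simp: ssm_rand_idx_def)
  ultimately show ?thesis
    using assms by (simp add: coupled_rand_def coupled_state_def refresh_out_def algebra_simps)
qed

lemma ssm_state_coupled_at_probed_wire:
  assumes "w \<in> P" "wire_iter w = Suc j" "c \<in> wire_shares w" "k \<in> {1..l}"
  shows "ssm_state n x' p' (coupled_rand r) k j c = ssm_state n x p r k j c"
proof -
  have "ssm_valid_wire n l w" using assms(1) P_wires by (auto simp: ssm_wires_def)
  then have "j \<le> n" "c \<in> {1..n}"
    using assms(2,3) wire_iter_le wire_shares_subset[OF n_pos] by fastforce+
  then show ?thesis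
    using ssm_state_coupled_rand[OF assms(4)] diff_zero_at_probed_wire[OF assms(1-3)]
    by (simp add: coupled_state_def)
qed

lemma wire_val_coupled:
  assumes "w \<in> P"
  shows "ssm_wire_val n x' p' (coupled_rand r) w = ssm_wire_val n x p r w"
proof (cases "\<exists>i k. w = WX i k")
  case True
  have "probed_upto P 0" by (simp add: probed_upto_def)
  then show ?thesis using True assms x_agree by (force simp: sim_x_shares_def)
next
  case False
  have valid: "ssm_valid_wire n l w" using assms P_wires by (auto simp: ssm_wires_def)
  then obtain j where j: "wire_iter w = Suc j"
    using False wire_iter_eq_0_iff not0_implies_Suc by metis
  then have probed: "probed_iter P (Suc j)" using assms by (force simp: probed_iter_def)
  note p_eq = p_agree_probed[OF probed]
  note state_eq = ssm_state_coupled_at_probed_wire[OF assms j]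
  note rand_eq = coupled_rand_probed_iter[OF probed]
  show ?thesis
  proof (cases w)
    case (WAcc j' k m)
    have "(\<Sum>m'\<in>{2..m}. coupled_rand r (j', k, m')) = (\<Sum>m'\<in>{2..m}. r (j', k, m'))"
      using rand_eq valid WAcc j by (intro sum.cong) (auto simp: ssm_rand_idx_def)
    then show ?thesis using WAcc j valid p_eq state_eq by simp
  qed (use j valid p_eq state_eq rand_eq False in \<open>auto simp: ssm_rand_idx_def\<close>)
qed

lemma ssm_out_coupled:
  assumes "i \<in> Q"
  shows "ssm_out n l x' p' (coupled_rand r) i = ssm_out n l x p r i"
proof -
  have i: "i \<in> {1..n}" "i \<noteq> c0" using assms Q_shares c0_not_output by auto
  have "\<not> probed_upto P n" using unprobed_iter by (auto simp: probed_upto_def)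
  then have "diff k n i = 0" for k using diff_invariant i by blast
  then show ?thesis
    unfolding ssm_out_def using ssm_state_coupled_rand[of _ n i r] i by (auto simp: coupled_state_def)
qed

lemma coupled_rand_maps_into: "coupled_rand ` ssm_rand_space n l \<subseteq> ssm_rand_space n l"
  by (auto simp: ssm_rand_space_def PiE_dflt_def coupled_rand_def)

lemma coupled_rand_inj_on: "inj_on coupled_rand (ssm_rand_space n l)"
proof (rule inj_onI)
  fix r1 r2 assume r: "r1 \<in> ssm_rand_space n l" "r2 \<in> ssm_rand_space n l"
    and eq: "coupled_rand r1 = coupled_rand r2"
  have states: "ssm_state n x p r1 k j i = ssm_state n x p r2 k j i"
    if "k \<in> {1..l}" "j \<le> n" "i \<in> {1..n}" for k j i
    using ssm_state_coupled_rand[OF that, of r1] ssm_state_coupled_rand[OF that, of r2] eq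
    by (simp add: coupled_state_def)
  show "r1 = r2"
  proof
    fix jkm :: "nat \<times> nat \<times> nat"
    obtain j k m where jkm: "jkm = (j, k, m)" by (cases jkm)
    show "r1 jkm = r2 jkm"
    proof (cases "jkm \<in> ssm_rand_idx n l")
      case True
      then have "k \<in> {1..l}" "j \<le> n" "j - 1 \<le> n" "m \<in> {1..n}"
        using jkm by (auto simp: ssm_rand_idx_def)
      then show ?thesis
        using True jkm ssm_rand_from_states[of j k m n l r1 p x] ssm_rand_from_states[of j k m n l r2 p x] states
        by simp
    next
      case False
      then show ?thesis using r jkm by (auto simp: ssm_rand_space_def PiE_dflt_def)
    qed
  qed
qed

lemma ssm_leak_coupled: "ssm_leak n l P Q x' p' = ssm_leak n l P Q x p"
proof -
  have "ssm_leak n l P Q x' p' = map_pmf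
      (\<lambda>r. (\<lambda>w. if w \<in> P then ssm_wire_val n x' p' r w else 0,
            \<lambda>i. if i \<in> Q then ssm_out n l x' p' r i else (\<lambda>_. 0)))
      (map_pmf coupled_rand (ssm_rand n l))"
    unfolding ssm_leak_def map_pmf_ssm_rand_inj[OF coupled_rand_inj_on coupled_rand_maps_into] ..
  also have "\<dots> = ssm_leak n l P Q x p"
    unfolding ssm_leak_def pmf.map_comp o_def
    by (intro pmf.map_cong refl) (auto simp: wire_val_coupled ssm_out_coupled)
  finally show ?thesis .
qed

end

lemma ssm_leak_restrict_sim_shares:
  assumes "P \<subseteq> ssm_wires n l" "Q \<subseteq> {1..n}" "finite P" "card P + card Q < n"
  shows "ssm_leak n l P Q x p
       = ssm_leak n l P Q (restrict x (sim_x_shares P)) (restrict p (sim_p_shares P))"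
proof -
  have "finite Q" using assms(2) finite_subset by blast
  then obtain c0 where "c0 \<in> {1..n}" "c0 \<notin> \<Union> (wire_shares ` P)" "c0 \<notin> Q"
    using exists_unobserved_share assms(3,4) by blast
  moreover have "\<exists>j\<in>{1..n}. \<not> probed_iter P j"
    using exists_unprobed_iter assms(3,4) by simp
  ultimately interpret ssm_coupling n l P Q c0 x "restrict x (sim_x_shares P)"
    p "restrict p (sim_p_shares P)"
    using assms(1,2) by unfold_locales auto
  show ?thesis using ssm_leak_coupled by simp
qed

theorem lemma2:
  fixes t n l :: nat
  assumes "t \<ge> 1" and "n = t + 1"
  shows "t_SNI t n (ssm_wires n l) (ssm_valid n)
           (ssm_leak n l :: wire set \<Rightarrow> nat set \<Rightarrow> (nat \<Rightarrow> nat \<Rightarrow> 'a::{field,finite}) \<Rightarrow> _)"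
proof (rule t_SNI_if_leak_determined_by_shares)
  fix P Q assume P: "P \<subseteq> ssm_wires n l" and Q: "Q \<subseteq> {1..n}" and "finite P"
    and "card P + card Q \<le> t"
  have "sim_x_shares P \<subseteq> {1..n}"
    using P wire_shares_subset assms by (fastforce simp: sim_x_shares_def ssm_wires_def)
  moreover have "sim_p_shares P \<subseteq> {1..n}"
    using P wire_iter_le by (fastforce simp: sim_p_shares_def ssm_wires_def)
  ultimately show "\<exists>I J. I \<subseteq> {1..n} \<and> J \<subseteq> {1..n} \<and> card I \<le> card P \<and> card J \<le> card P \<and>
      (\<forall>x p. ssm_valid n x p \<longrightarrow> ssm_leak n l P Q x p = ssm_leak n l P Q (restrict x I) (restrict p J))"
    using ssm_leak_restrict_sim_shares[OF P Q] card_sim_x_shares_le card_sim_p_shares_le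
      \<open>finite P\<close> \<open>card P + card Q \<le> t\<close> assms(2) by (metis less_add_one order_le_less_trans)
qed

end
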